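(* Let $SP_t(k)$ denote the smallest $n$ such that $PPL_t(n)=k$, and write $(w)_4$ for the integer whose base-4 representation is the digit string $w$. Then $SP_t(3k+2)=((12)^k2)_4$ for all $k\geq 0$; $SP_t(3k)=(1(12)^{k-1}2)_4$ for all $k\geq 1$; and $SP_t(3k+1)=(2(12)^{k-1}2)_4$ for all $k\geq 1$. Here $(12)^k$ denotes the digit string $12$ repeated $k$ times.
   Context: The Thue-Morse word $t=t[1]t[2]\cdots=abbabaabbaababba\cdots$ is the fixed point starting with $a$ of the morphism $a\mapsto abba,\ b\mapsto baab$. A palindrome is a word $p=p[1]\cdots p[n]$ with $p[i]=p[n-i+1]$ for all $i$. $PPL_t(n)$ is the minimal number of nonempty palindromes whose concatenation equals the prefix of $t$ of length $n$. *)

theory Defs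
  imports Main
begin

datatype letter = A | B

fun tm_morph :: "letter \<Rightarrow> letter list" where
  "tm_morph A = [A, B, B, A]"
| "tm_morph B = [B, A, A, B]"

(* n-fold iterate of the morphism applied to the letter a; it has length 4^n
   and is a prefix of the fixed point t *)
fun tm_iter :: "nat \<Rightarrow> letter list" where
  "tm_iter 0 = [A]"
| "tm_iter (Suc n) = concat (map tm_morph (tm_iter n))"

(* prefix of length n of the Thue-Morse word t (since 4^n \<ge> n) *)
definition tm_prefix :: "nat \<Rightarrow> letter list" where
  "tm_prefix n = take n (tm_iter n)"

definition palindrome :: "'a list \<Rightarrow> bool" where
  "palindrome p \<longleftrightarrow> rev p = p"

definition pal_length :: "'a list \<Rightarrow> nat" where
  "pal_length w = (LEAST k. \<exists>ps. length ps = k \<and> concat ps = w \<and>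
                      (\<forall>p\<in>set ps. p \<noteq> [] \<and> palindrome p))"

definition PPL_t :: "nat \<Rightarrow> nat" where
  "PPL_t n = pal_length (tm_prefix n)"

definition SP_t :: "nat \<Rightarrow> nat" where
  "SP_t k = (LEAST n. PPL_t n = k)"

definition base4 :: "nat list \<Rightarrow> nat" where
  "base4 ds = foldl (\<lambda>acc d. 4 * acc + d) 0 ds"

end

theory Submission
  imports Defs
begin

(* Index t from 0.  Since t(2m) <> t(2m+1) and t contains neither aaa nor bbb, a
   palindromic factor of t of odd length has length 1 or 3 (and then starts at a position
   congruent to 2 or 3 mod 4), while one of even length is centred at a multiple of 4.
   The latter is the image under the morphism of a shorter palindromic factor, trimmed by
   the same number s of letters at both ends.  Following the last palindrome of an optimal
   factorisation of a prefix through this correspondence gives the recursion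
     PPL_t(4n) = PPL_t(n),                       PPL_t(4n+1) = PPL_t(n) + 1,
     PPL_t(4n+2) = min(PPL_t(n), PPL_t(n+1)) + 2,  PPL_t(4n+3) = PPL_t(n+1) + 1.
   For this recursion, the least m with PPL_t(m) >= k, which is SP_t(k), and the least m
   with min(PPL_t(m), PPL_t(m+1)) >= k satisfy a joint linear recurrence in k.  Solving
   it, the second one has the base-4 expansion (12)^j, 1(12)^j or 2(12)^j for
   k = 3j, 3j+1, 3j+2, and SP_t(k+2) is the second one at k followed by the digit 2. *)

section \<open>The Thue-Morse word\<close>

(* thue_morse n is the parity of the binary digit sum of n; the letter t[n+1] of the
   statement is tm_letter n. *)
function thue_morse :: "nat \<Rightarrow> bool" where
  "thue_morse n = (if n = 0 then False else thue_morse (n div 2) \<noteq> odd n)"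
  by auto
termination by (relation "measure id") auto

declare thue_morse.simps[simp del]

lemma thue_morse_0 [simp]: "thue_morse 0 = False"
  by (simp add: thue_morse.simps)

lemma thue_morse_double [simp]: "thue_morse (2 * m) = thue_morse m"
  by (cases "m = 0") (simp_all add: thue_morse.simps[of "2 * m"])

lemma thue_morse_double_Suc [simp]: "thue_morse (2 * m + 1) = (\<not> thue_morse m)"
  using thue_morse.simps[of "2 * m + 1"] by simp

lemma thue_morse_4_add:
  assumes "b < 4"
  shows "thue_morse (4 * m + b) = (thue_morse m \<noteq> (b = 1 \<or> b = 2))"
proof -
  consider "4 * m + b = 2 * (2 * m)" "b = 0" | "4 * m + b = 2 * (2 * m) + 1" "b = 1"
    | "4 * m + b = 2 * (2 * m + 1)" "b = 2" | "4 * m + b = 2 * (2 * m + 1) + 1" "b = 3"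
    using assms by (auto simp: less_Suc_eq numeral_eq_Suc)
  then show ?thesis
    by cases (simp_all only: thue_morse_double thue_morse_double_Suc, simp_all)
qed

lemma thue_morse_no_cube:
  "\<not> (thue_morse m = thue_morse (m + 1) \<and> thue_morse (m + 1) = thue_morse (m + 2))"
proof (cases "even m")
  case True
  then obtain a where "m = 2 * a" by blast
  then show ?thesis using thue_morse_double_Suc[of a] by simp
next
  case False
  then obtain a where "m = 2 * a + 1" using oddE by blast
  moreover have "2 * a + 1 + 1 = 2 * (a + 1)" "2 * a + 1 + 2 = 2 * (a + 1) + 1" by simp_all
  ultimately show ?thesis by (simp only: thue_morse_double thue_morse_double_Suc) simp
qed

lemma thue_morse_mirror_block:
  assumes "s \<le> 3"
  shows "(thue_morse (4 * x + s) = thue_morse (4 * y + 3 - s)) = (thue_morse x = thue_morse y)"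
proof -
  have "4 * y + 3 - s = 4 * y + (3 - s)" using assms by simp
  moreover have "(3 - s = 1 \<or> 3 - s = 2) = (s = 1 \<or> s = 2)" using assms by auto
  ultimately show ?thesis
    using assms thue_morse_4_add[of s x] thue_morse_4_add[of "3 - s" y] by auto
qed

definition tm_letter :: "nat \<Rightarrow> letter" where
  "tm_letter i = (if thue_morse i then B else A)"

lemma tm_morph_tm_letter:
  "tm_morph (tm_letter m) = map tm_letter [4 * m..<4 * m + 4]"
proof -
  have "[4 * m..<4 * m + 4] = [4 * m, 4 * m + 1, 4 * m + 2, 4 * m + 3]"
    by (simp add: upt_rec)
  then show ?thesis
    using thue_morse_4_add[of 1 m] thue_morse_4_add[of 2 m] thue_morse_4_add[of 3 m]
      thue_morse_4_add[of 0 m]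
    by (simp add: tm_letter_def)
qed

lemma concat_tm_morph_tm_letter:
  "concat (map (tm_morph \<circ> tm_letter) [0..<m]) = map tm_letter [0..<4 * m]"
proof (induction m)
  case (Suc m)
  have "[0..<4 * Suc m] = [0..<4 * m] @ [4 * m..<4 * m + 4]"
    using upt_add_eq_append[of 0 "4 * m" 4] by (simp add: add.commute)
  with Suc show ?case by (simp add: tm_morph_tm_letter)
qed simp

lemma tm_iter_eq: "tm_iter n = map tm_letter [0..<4 ^ n]"
proof (induction n)
  case 0
  show ?case by (simp add: tm_letter_def)
next
  case (Suc n)
  then show ?case by (simp add: concat_tm_morph_tm_letter)
qed

lemma tm_prefix_eq: "tm_prefix n = map tm_letter [0..<n]"
proof -
  have "n < 2 ^ n" by (rule less_exp)
  also have "(2::nat) ^ n \<le> 4 ^ n" by (simp add: power_mono)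
  finally show ?thesis by (simp add: tm_prefix_def tm_iter_eq take_map)
qed

section \<open>Palindromic length\<close>

lemma pal_length_le:
  assumes "concat ps = w" and "\<forall>p\<in>set ps. p \<noteq> [] \<and> palindrome p"
  shows "pal_length w \<le> length ps"
  unfolding pal_length_def using assms by (intro Least_le) blast

lemma pal_length_attained:
  "\<exists>ps. length ps = pal_length w \<and> concat ps = w \<and> (\<forall>p\<in>set ps. p \<noteq> [] \<and> palindrome p)"
proof -
  have singletons: "length (map (\<lambda>x. [x]) w) = length w \<and> concat (map (\<lambda>x. [x]) w) = w \<and>
      (\<forall>p\<in>set (map (\<lambda>x. [x]) w). p \<noteq> [] \<and> palindrome p)"
    by (auto simp: palindrome_def)
  show ?thesis
    unfolding pal_length_def by (rule LeastI_ex) (use singletons in blast)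
qed

lemma pal_length_Nil: "pal_length [] = 0"
  using pal_length_le[of "[]" "[]"] by simp

lemma pal_length_append_palindrome:
  assumes "p \<noteq> []" and "palindrome p"
  shows "pal_length (u @ p) \<le> pal_length u + 1"
proof -
  obtain ps where ps: "length ps = pal_length u" "concat ps = u"
    "\<forall>q\<in>set ps. q \<noteq> [] \<and> palindrome q"
    using pal_length_attained by blast
  have "pal_length (u @ p) \<le> length (ps @ [p])"
    using ps assms by (intro pal_length_le) auto
  with ps show ?thesis by simp
qed

lemma pal_length_last_palindrome:
  assumes "w \<noteq> []"
  obtains u p where "w = u @ p" "p \<noteq> []" "palindrome p" "pal_length w = pal_length u + 1"
proof -
  obtain ps where ps: "length ps = pal_length w" "concat ps = w"
    "\<forall>q\<in>set ps. q \<noteq> [] \<and> palindrome q"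
    using pal_length_attained by blast
  with assms obtain qs p where qs: "ps = qs @ [p]"
    by (metis concat.simps(1) rev_exhaust)
  with ps have p: "p \<noteq> []" "palindrome p" by auto
  have "pal_length (concat qs) \<le> length qs"
    using ps(3) qs by (intro pal_length_le) auto
  moreover have "pal_length w \<le> pal_length (concat qs) + 1"
    using pal_length_append_palindrome[OF p, of "concat qs"] ps(2) qs by simp
  ultimately have "pal_length w = pal_length (concat qs) + 1"
    using ps(1) qs by simp
  with p ps(2) qs show thesis by (intro that) auto
qed

section \<open>Palindromic factors of the Thue-Morse word\<close>

(* The factor of t at the 0-based positions i, ..., j - 1 is a palindrome. *)
definition tm_pal :: "nat \<Rightarrow> nat \<Rightarrow> bool" where
  "tm_pal i j \<longleftrightarrow>
     (\<forall>a b. i \<le> a \<longrightarrow> a < j \<longrightarrow> a + b + 1 = i + j \<longrightarrow> thue_morse a = thue_morse b)"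

lemma palindrome_tm_factor: "palindrome (map tm_letter [i..<j]) \<longleftrightarrow> tm_pal i j"
proof -
  have "palindrome (map tm_letter [i..<j]) \<longleftrightarrow>
      (\<forall>k < j - i. thue_morse (j - 1 - k) = thue_morse (i + k))"
    by (auto simp: palindrome_def list_eq_iff_nth_eq rev_nth tm_letter_def split: if_splits)
  also have "\<dots> \<longleftrightarrow> tm_pal i j"
  proof
    assume sym: "\<forall>k < j - i. thue_morse (j - 1 - k) = thue_morse (i + k)"
    show "tm_pal i j"
      unfolding tm_pal_def
    proof (intro allI impI)
      fix a b assume "i \<le> a" "a < j" "a + b + 1 = i + j"
      then have "a - i < j - i" "j - 1 - (a - i) = b" "i + (a - i) = a" by arith+
      then show "thue_morse a = thue_morse b" using sym by metis
    qed
  next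
    assume "tm_pal i j"
    show "\<forall>k < j - i. thue_morse (j - 1 - k) = thue_morse (i + k)"
    proof (intro allI impI)
      fix k assume "k < j - i"
      then have "i \<le> i + k" "i + k < j" "(i + k) + (j - 1 - k) + 1 = i + j" by arith+
      then show "thue_morse (j - 1 - k) = thue_morse (i + k)"
        using \<open>tm_pal i j\<close> unfolding tm_pal_def by metis
    qed
  qed
  finally show ?thesis .
qed

lemma tm_pal_Suc: "tm_pal i (Suc i)"
  unfolding tm_pal_def
proof (intro allI impI)
  fix a b assume "i \<le> a" "a < Suc i" "a + b + 1 = i + Suc i"
  then have "a = i" "b = i" by arith+
  then show "thue_morse a = thue_morse b" by simp
qed

lemma tm_pal_shrink:
  assumes "tm_pal i j"
  shows "tm_pal (i + 1) (j - 1)"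
  unfolding tm_pal_def
proof (intro allI impI)
  fix a b assume "i + 1 \<le> a" "a < j - 1" "a + b + 1 = i + 1 + (j - 1)"
  then have "i \<le> a" "a < j" "a + b + 1 = i + j" by arith+
  then show "thue_morse a = thue_morse b" using assms unfolding tm_pal_def by blast
qed

lemma tm_pal_even_length:
  assumes "tm_pal i j" and "i < j" and "even (j - i)"
  shows "4 dvd i + j"
proof -
  obtain l where l: "j - i = 2 * l" using assms(3) by blast
  have "i \<le> i + l - 1" "i + l - 1 < j" "(i + l - 1) + (i + l) + 1 = i + j"
    using assms(2) l by arith+
  then have centre: "thue_morse (i + l - 1) = thue_morse (i + l)"
    using assms(1) unfolding tm_pal_def by blast
  have "even (i + l)"
  proof (rule ccontr)
    assume "odd (i + l)"
    then obtain m where "i + l = 2 * m + 1" using oddE by blast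
    with centre show False using thue_morse_double_Suc[of m] by simp
  qed
  then obtain m where "i + l = 2 * m" by blast
  with l assms(2) have "i + j = 4 * m" by arith
  then show ?thesis by simp
qed

lemma tm_pal_odd_length:
  assumes "tm_pal i j" and "odd (j - i)"
  shows "j - i \<le> 3"
proof (rule ccontr)
  assume long: "\<not> j - i \<le> 3"
  obtain l where l: "j - i = 2 * l + 1" using assms(2) oddE by blast
  define c where "c = i + l"
  have "i \<le> c - 2" "c - 2 < j" "(c - 2) + (c + 2) + 1 = i + j"
    "i \<le> c - 1" "c - 1 < j" "(c - 1) + (c + 1) + 1 = i + j" "c \<ge> 2"
    using l long unfolding c_def by arith+
  then have outer: "thue_morse (c - 2) = thue_morse (c + 2)"
    and inner: "thue_morse (c - 1) = thue_morse (c + 1)"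
    using assms(1) unfolding tm_pal_def by blast+
  define m where "m = c div 2 - 1"
  consider "c = 2 * m + 2" | "c = 2 * m + 3"
    using \<open>c \<ge> 2\<close> unfolding m_def by arith
  then show False
  proof cases
    case 1
    then have "c - 2 = 2 * m" "c - 1 = 2 * m + 1" "c + 1 = 2 * (m + 1) + 1" "c + 2 = 2 * (m + 2)"
      by simp_all
    then show False using outer inner thue_morse_no_cube[of m]
      by (simp only: thue_morse_double thue_morse_double_Suc) simp
  next
    case 2
    then have "c - 2 = 2 * m + 1" "c - 1 = 2 * (m + 1)" "c + 1 = 2 * (m + 2)" "c + 2 = 2 * (m + 2) + 1"
      by simp_all
    then show False using outer inner thue_morse_no_cube[of m]
      by (simp only: thue_morse_double thue_morse_double_Suc) simp
  qed
qed

lemma tm_pal_length_3: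
  assumes "tm_pal i (i + 3)"
  shows "i mod 4 = 2 \<or> i mod 4 = 3"
proof (rule ccontr)
  assume "\<not> ?thesis"
  then have s: "i mod 4 < 2" by linarith
  have "i \<le> i" "i < i + 3" "i + (i + 2) + 1 = i + (i + 3)" by simp_all
  then have "thue_morse i = thue_morse (i + 2)"
    using assms unfolding tm_pal_def by blast
  moreover have "i = 4 * (i div 4) + i mod 4" "i + 2 = 4 * (i div 4) + (i mod 4 + 2)" by simp_all
  ultimately show False
    using thue_morse_4_add[of "i mod 4" "i div 4"] thue_morse_4_add[of "i mod 4 + 2" "i div 4"] s
    by auto
qed

lemma tm_pal_block_preimage:
  assumes "s \<le> 3" and "p < q" and big: "tm_pal (4 * p + s) (4 * q - s)"
  shows "tm_pal p q"
  unfolding tm_pal_def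
proof (intro allI impI)
  fix x y assume xy: "p \<le> x" "x < q" "x + y + 1 = p + q"
  show "thue_morse x = thue_morse y"
  proof (cases "q = p + 1")
    case True
    with xy have "x = y" by arith
    then show ?thesis by simp
  next
    case False
    \<comment> \<open>a position of block x that lies inside the trimmed factor\<close>
    define r where "r = (if x = p then 3 else 0 :: nat)"
    have "r \<le> 3" "4 * p + s \<le> 4 * x + r" "4 * x + r < 4 * q - s"
      "(4 * x + r) + (4 * y + 3 - r) + 1 = (4 * p + s) + (4 * q - s)"
      using xy False assms(1,2) unfolding r_def by auto
    then have "thue_morse (4 * x + r) = thue_morse (4 * y + 3 - r)"
      using big unfolding tm_pal_def by blast
    then show ?thesis using thue_morse_mirror_block[OF \<open>r \<le> 3\<close>] by blast
  qed
qed

lemma tm_pal_block_image: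
  assumes "s \<le> 3" and small: "tm_pal p q"
  shows "tm_pal (4 * p + s) (4 * q - s)"
  unfolding tm_pal_def
proof (intro allI impI)
  fix a b assume ab: "4 * p + s \<le> a" "a < 4 * q - s" "a + b + 1 = 4 * p + s + (4 * q - s)"
  define x where "x = a div 4"
  define r where "r = a mod 4"
  have "r \<le> 3" "a = 4 * x + r" unfolding x_def r_def by simp_all
  with ab assms(1) have "p \<le> x" "x < q" "x + (p + q - 1 - x) + 1 = p + q"
    "b = 4 * (p + q - 1 - x) + 3 - r"
    by arith+
  then have "thue_morse x = thue_morse (p + q - 1 - x)"
    using small unfolding tm_pal_def by blast
  then show "thue_morse a = thue_morse b"
    using thue_morse_mirror_block[OF \<open>r \<le> 3\<close>] \<open>a = 4 * x + r\<close> \<open>b = _\<close> by blast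
qed

lemma tm_pal_cases:
  assumes "tm_pal i j" and "i < j"
  obtains "j = i + 1"
  | "j = i + 3" "i mod 4 = 2 \<or> i mod 4 = 3"
  | p q s where "s \<le> 3" "p < q" "i = 4 * p + s" "j = 4 * q - s" "tm_pal p q"
proof (cases "even (j - i)")
  case True
  define p where "p = i div 4"
  define s where "s = i mod 4"
  have i: "i = 4 * p + s" "s \<le> 3" unfolding p_def s_def by simp_all
  have "4 dvd i + j" using tm_pal_even_length[OF assms True] .
  then obtain c where "i + j = 4 * c" by blast
  define q where "q = c - p"
  have "j = 4 * q - s" "p < q"
    using i \<open>i + j = 4 * c\<close> \<open>i < j\<close> unfolding q_def by arith+
  with i assms(1) show thesis
    using tm_pal_block_preimage that(3) by blast
next
  case False
  moreover have "j - i \<le> 3" using tm_pal_odd_length[OF assms(1) False] .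
  ultimately have "j = i + 1 \<or> j = i + 3"
    using assms(2) by presburger
  then consider "j = i + 1" | "j = i + 3" by blast
  then show thesis
  proof cases
    case 2
    with assms(1) show thesis using that(2) tm_pal_length_3 by blast
  qed (rule that(1))
qed

lemma PPL_t_0: "PPL_t 0 = 0"
  by (simp add: PPL_t_def tm_prefix_eq pal_length_Nil)

lemma PPL_t_append_pal:
  assumes "i < N" and "tm_pal i N"
  shows "PPL_t N \<le> PPL_t i + 1"
proof -
  have "[0..<N] = [0..<i] @ [i..<N]"
    using upt_add_eq_append[of 0 i "N - i"] assms(1) by simp
  moreover have "palindrome (map tm_letter [i..<N])" "map tm_letter [i..<N] \<noteq> []"
    using assms by (simp_all add: palindrome_tm_factor)
  ultimately show ?thesis
    using pal_length_append_palindrome[of "map tm_letter [i..<N]" "map tm_letter [0..<i]"]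
    by (simp add: PPL_t_def tm_prefix_eq)
qed

lemma PPL_t_last_pal:
  assumes "0 < N"
  obtains i where "i < N" "tm_pal i N" "PPL_t N = PPL_t i + 1"
proof -
  have "map tm_letter [0..<N] \<noteq> []" using assms by simp
  then obtain u p where up: "map tm_letter [0..<N] = u @ p" "p \<noteq> []" "palindrome p"
    "pal_length (map tm_letter [0..<N]) = pal_length u + 1"
    by (rule pal_length_last_palindrome)
  define i where "i = length u"
  have "length u + length p = N" using arg_cong[OF up(1), of length] by simp
  moreover have "length p > 0" using up(2) by simp
  ultimately have "i < N" unfolding i_def by linarith
  have "u = map tm_letter [0..<i]" "p = map tm_letter [i..<N]"
    using arg_cong[OF up(1), of "take i"] arg_cong[OF up(1), of "drop i"] \<open>i < N\<close>
    unfolding i_def by (simp_all add: take_map drop_map)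
  with up \<open>i < N\<close> show thesis
    by (intro that) (simp_all add: PPL_t_def tm_prefix_eq palindrome_tm_factor)
qed

lemma PPL_t_Suc_le: "PPL_t (n + 1) \<le> PPL_t n + 1"
  using PPL_t_append_pal[OF _ tm_pal_Suc] by simp

lemma PPL_t_mult_4_le: "PPL_t (4 * n) \<le> PPL_t n"
proof (induction n rule: less_induct)
  case (less n)
  show ?case
  proof (cases "n = 0")
    case False
    then obtain p where p: "p < n" "tm_pal p n" "PPL_t n = PPL_t p + 1"
      using PPL_t_last_pal[of n] by auto
    have "tm_pal (4 * p) (4 * n)"
      using tm_pal_block_image[of 0 p n] p by simp
    then have "PPL_t (4 * n) \<le> PPL_t (4 * p) + 1"
      using p(1) by (intro PPL_t_append_pal) simp_all
    also have "\<dots> \<le> PPL_t n"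
      using less.IH[OF p(1)] p(3) by simp
    finally show ?thesis .
  qed (simp add: PPL_t_0)
qed

lemma PPL_t_4_1_le: "PPL_t (4 * n + 1) \<le> PPL_t n + 1"
  using PPL_t_mult_4_le[of n] PPL_t_Suc_le[of "4 * n"] by simp

lemma PPL_t_4_2_le: "PPL_t (4 * n + 2) \<le> min (PPL_t n) (PPL_t (n + 1)) + 2"
proof -
  have via_4_1: "PPL_t (4 * p + 2) \<le> PPL_t p + 2" for p
    using PPL_t_4_1_le[of p] PPL_t_Suc_le[of "4 * p + 1"] by simp
  obtain p where p: "p < n + 1" "tm_pal p (n + 1)" "PPL_t (n + 1) = PPL_t p + 1"
    using PPL_t_last_pal[of "n + 1"] by auto
  have "PPL_t (4 * n + 2) \<le> PPL_t (n + 1) + 2"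
  proof (cases "p = n")
    case True
    \<comment> \<open>the trimmed image of the one-letter factor is empty\<close>
    with via_4_1[of n] p(3) show ?thesis by simp
  next
    case False
    have "tm_pal (4 * p + 2) (4 * n + 2)"
      using tm_pal_block_image[of 2 p "n + 1"] p by simp
    then have "PPL_t (4 * n + 2) \<le> PPL_t (4 * p + 2) + 1"
      using p(1) False by (intro PPL_t_append_pal) simp_all
    with via_4_1[of p] p(3) show ?thesis by simp
  qed
  with via_4_1[of n] show ?thesis by simp
qed

lemma PPL_t_4_3_le: "PPL_t (4 * n + 3) \<le> PPL_t (n + 1) + 1"
proof -
  obtain p where p: "p < n + 1" "tm_pal p (n + 1)" "PPL_t (n + 1) = PPL_t p + 1"
    using PPL_t_last_pal[of "n + 1"] by auto
  have "tm_pal (4 * p + 1) (4 * n + 3)"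
    using tm_pal_block_image[of 1 p "n + 1"] p by (simp add: add.commute)
  then have "PPL_t (4 * n + 3) \<le> PPL_t (4 * p + 1) + 1"
    using p(1) by (intro PPL_t_append_pal) simp_all
  also have "\<dots> \<le> PPL_t p + 2"
    using PPL_t_4_1_le[of p] by simp
  finally show ?thesis using p(3) by simp
qed

section \<open>The recursion for the palindromic length\<close>

lemma mod_4_cases:
  fixes m :: nat
  obtains n where "m = 4 * n" | n where "m = 4 * n + 1" | n where "m = 4 * n + 2"
    | n where "m = 4 * n + 3"
proof -
  have "(\<exists>n. m = 4 * n) \<or> (\<exists>n. m = 4 * n + 1) \<or> (\<exists>n. m = 4 * n + 2) \<or> (\<exists>n. m = 4 * n + 3)"
    by presburger
  with that show thesis by blast
qed

function ppl_rec :: "nat \<Rightarrow> nat" where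
  "ppl_rec n =
    (if n = 0 then 0
     else if n mod 4 = 0 then ppl_rec (n div 4)
     else if n mod 4 = 1 then ppl_rec (n div 4) + 1
     else if n mod 4 = 2 then min (ppl_rec (n div 4)) (ppl_rec (n div 4 + 1)) + 2
     else ppl_rec (n div 4 + 1) + 1)"
  by auto
termination by (relation "measure id") (auto intro: div_less_dividend)

declare ppl_rec.simps[simp del]

lemma ppl_rec_0: "ppl_rec 0 = 0"
  by (simp add: ppl_rec.simps)

lemma ppl_rec_4:
  "m = 4 * n \<Longrightarrow> ppl_rec m = ppl_rec n"
  "m = 4 * n + 1 \<Longrightarrow> ppl_rec m = ppl_rec n + 1"
  "m = 4 * n + 2 \<Longrightarrow> ppl_rec m = min (ppl_rec n) (ppl_rec (n + 1)) + 2"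
  "m = 4 * n + 3 \<Longrightarrow> ppl_rec m = ppl_rec (n + 1) + 1"
proof -
  assume "m = 4 * n"
  then show "ppl_rec m = ppl_rec n"
    by (cases "n = 0") (simp_all add: ppl_rec_0 ppl_rec.simps[of "4 * n"])
next
  assume "m = 4 * n + 1"
  then have "m \<noteq> 0" "m mod 4 = 1" "m div 4 = n" by presburger+
  then show "ppl_rec m = ppl_rec n + 1" by (subst ppl_rec.simps) simp
next
  assume "m = 4 * n + 2"
  then have "m \<noteq> 0" "m mod 4 = 2" "m div 4 = n" by presburger+
  then show "ppl_rec m = min (ppl_rec n) (ppl_rec (n + 1)) + 2" by (subst ppl_rec.simps) simp
next
  assume "m = 4 * n + 3"
  then have "m \<noteq> 0" "m mod 4 = 3" "m div 4 = n" by presburger+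
  then show "ppl_rec m = ppl_rec (n + 1) + 1" by (subst ppl_rec.simps) simp
qed

lemma ppl_rec_Suc_le: "ppl_rec (m + 1) \<le> ppl_rec m + 1"
proof (induction m rule: less_induct)
  case (less m)
  show ?case
  proof (cases m rule: mod_4_cases)
    case (1 n)
    then show ?thesis using ppl_rec_4(1)[of m n] ppl_rec_4(2)[of "m + 1" n] by simp
  next
    case (2 n)
    then show ?thesis using ppl_rec_4(2)[of m n] ppl_rec_4(3)[of "m + 1" n] by simp
  next
    case (3 n)
    then have "ppl_rec (n + 1) \<le> ppl_rec n + 1" by (intro less.IH) simp
    with 3 show ?thesis using ppl_rec_4(3)[of m n] ppl_rec_4(4)[of "m + 1" n] by simp
  next
    case (4 n)
    then show ?thesis using ppl_rec_4(4)[of m n] ppl_rec_4(1)[of "m + 1" "n + 1"] by simp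
  qed
qed

lemma ppl_rec_add_3_le:
  assumes "i mod 4 = 2 \<or> i mod 4 = 3"
  shows "ppl_rec (i + 3) \<le> ppl_rec i + 1"
proof -
  consider p where "i = 4 * p + 2" | p where "i = 4 * p + 3"
    using assms by (metis div_mult_mod_eq mult.commute)
  then show ?thesis
  proof cases
    case (1 p)
    then show ?thesis
      using ppl_rec_4(3)[of i p] ppl_rec_4(2)[of "i + 3" "p + 1"] ppl_rec_Suc_le[of p] by simp
  next
    case (2 p)
    then show ?thesis
      using ppl_rec_4(4)[of i p] ppl_rec_4(3)[of "i + 3" "p + 1"] by simp
  qed
qed

lemma ppl_rec_block_le:
  assumes "s \<le> 3" and "4 * p + s < 4 * q - s"
    and outer: "ppl_rec q \<le> ppl_rec p + 1"
    and inner: "2 \<le> s \<Longrightarrow> ppl_rec (q - 1) \<le> ppl_rec (p + 1) + 1"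
  shows "ppl_rec (4 * q - s) \<le> ppl_rec (4 * p + s) + 1"
proof -
  define r where "r = q - 1"
  have q: "q = r + 1" using assms(2) unfolding r_def by linarith
  consider "s = 0" | "s = 1" | "s = 2" | "s = 3" using assms(1) by linarith
  then show ?thesis
  proof cases
    case 1
    then show ?thesis
      using outer ppl_rec_4(1)[of "4 * q" q] ppl_rec_4(1)[of "4 * p" p] by simp
  next
    case 2
    then show ?thesis
      using outer q ppl_rec_4(4)[of "4 * q - 1" r] ppl_rec_4(2)[of "4 * p + 1" p] by simp
  next
    case 3
    then show ?thesis
      using outer inner q ppl_rec_4(3)[of "4 * q - 2" r] ppl_rec_4(3)[of "4 * p + 2" p] by simp
  next
    case 4
    then show ?thesis
      using inner q ppl_rec_4(2)[of "4 * q - 3" r] ppl_rec_4(4)[of "4 * p + 3" p] by simp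
  qed
qed

lemma ppl_rec_pal_le:
  assumes "i < N" and "tm_pal i N"
  shows "ppl_rec N \<le> ppl_rec i + 1"
  using assms
proof (induction N arbitrary: i rule: less_induct)
  case (less N)
  from less.prems(2,1) show ?case
  proof (cases rule: tm_pal_cases)
    case 1
    then show ?thesis using ppl_rec_Suc_le[of i] by simp
  next
    case 2
    then show ?thesis using ppl_rec_add_3_le by simp
  next
    case (3 p q s)
    have "q < N" using 3 less.prems(1) by linarith
    with 3 have outer: "ppl_rec q \<le> ppl_rec p + 1"
      by (intro less.IH) simp_all
    have inner: "ppl_rec (q - 1) \<le> ppl_rec (p + 1) + 1" if "2 \<le> s"
    proof (cases "p + 1 = q - 1")
      case False
      have "tm_pal (p + 1) (q - 1)" using tm_pal_shrink[OF \<open>tm_pal p q\<close>] .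
      moreover have "p + 1 < q - 1" "q - 1 < N" using 3 that False less.prems(1) by linarith+
      ultimately show ?thesis by (intro less.IH)
    qed simp
    from 3 outer inner show ?thesis
      using ppl_rec_block_le[of s p q] less.prems(1) by simp
  qed
qed

lemma ppl_rec_le_PPL_t: "ppl_rec n \<le> PPL_t n"
proof (induction n rule: less_induct)
  case (less n)
  show ?case
  proof (cases "n = 0")
    case False
    then obtain i where i: "i < n" "tm_pal i n" "PPL_t n = PPL_t i + 1"
      using PPL_t_last_pal[of n] by auto
    have "ppl_rec n \<le> ppl_rec i + 1" using ppl_rec_pal_le[OF i(1,2)] .
    also have "\<dots> \<le> PPL_t n" using less.IH[OF i(1)] i(3) by simp
    finally show ?thesis .
  qed (simp add: ppl_rec_0)
qed

lemma PPL_t_le_ppl_rec: "PPL_t n \<le> ppl_rec n"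
proof (induction n rule: less_induct)
  case (less n)
  show ?case
  proof (cases n rule: mod_4_cases)
    case (1 m)
    show ?thesis
    proof (cases "m = 0")
      case False
      with 1 have "PPL_t m \<le> ppl_rec m" by (intro less.IH) simp
      with 1 show ?thesis using PPL_t_mult_4_le[of m] ppl_rec_4(1)[of n m] by simp
    qed (use 1 in \<open>simp add: PPL_t_0\<close>)
  next
    case (2 m)
    then have "PPL_t m \<le> ppl_rec m" by (intro less.IH) simp
    with 2 show ?thesis using PPL_t_4_1_le[of m] ppl_rec_4(2)[of n m] by simp
  next
    case (3 m)
    then have "PPL_t m \<le> ppl_rec m" "PPL_t (m + 1) \<le> ppl_rec (m + 1)" by (intro less.IH, simp)+
    with 3 show ?thesis using PPL_t_4_2_le[of m] ppl_rec_4(3)[of n m] by simp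
  next
    case (4 m)
    then have "PPL_t (m + 1) \<le> ppl_rec (m + 1)" by (intro less.IH) simp
    with 4 show ?thesis using PPL_t_4_3_le[of m] ppl_rec_4(4)[of n m] by simp
  qed
qed

theorem PPL_t_eq_ppl_rec: "PPL_t n = ppl_rec n"
  using PPL_t_le_ppl_rec ppl_rec_le_PPL_t by (rule antisym)

section \<open>First prefixes of given palindromic length\<close>

(* first_reach k is the least m with k <= ppl_rec m, and first_pair_reach k the least m
   with k <= min (ppl_rec m) (ppl_rec (m + 1)); this is established by reach_bounds,
   ppl_rec_first_reach and ppl_rec_first_pair_reach. *)
fun first_pair_reach :: "nat \<Rightarrow> nat" where
  "first_pair_reach 0 = 0"
| "first_pair_reach (Suc 0) = 1"
| "first_pair_reach (Suc (Suc 0)) = 2"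
| "first_pair_reach (Suc (Suc (Suc k))) = 16 * first_pair_reach k + 6"

fun first_reach :: "nat \<Rightarrow> nat" where
  "first_reach 0 = 0"
| "first_reach (Suc 0) = 1"
| "first_reach (Suc (Suc k)) = 4 * first_pair_reach k + 2"

lemma first_pair_reach_Suc_le: "first_pair_reach (Suc k) \<le> 4 * first_pair_reach k + 1"
  by (induction k rule: first_pair_reach.induct) simp_all

lemma strict_mono_first_pair_reach: "strict_mono first_pair_reach"
proof -
  have "first_pair_reach k < first_pair_reach (Suc k)" for k
    by (induction k rule: first_pair_reach.induct) simp_all
  then show ?thesis by (simp add: strict_mono_Suc_iff)
qed

lemma strict_mono_first_reach: "strict_mono first_reach"
proof -
  have "first_reach k < first_reach (Suc k)" for k
    using strict_mono_first_pair_reach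
    by (cases k rule: first_reach.cases) (simp_all add: strict_mono_Suc_iff)
  then show ?thesis by (simp add: strict_mono_Suc_iff)
qed

lemma first_reach_Suc_less:
  assumes "1 \<le> k"
  shows "first_reach (Suc k) < 4 * first_reach k"
proof (cases k rule: first_reach.cases)
  case (3 j)
  with first_pair_reach_Suc_le[of j] show ?thesis by simp
qed (use assms in simp_all)

lemma first_reach_Suc_le: "first_reach (Suc k) \<le> 4 * first_reach k + 1"
  using first_reach_Suc_less[of k] by (cases k) simp_all

lemma first_pair_reach_less:
  assumes "1 \<le> k"
  shows "first_pair_reach k < 4 * first_reach k"
proof (cases k rule: first_pair_reach.cases)
  case (4 j)
  with strict_monoD[OF strict_mono_first_pair_reach, of j "Suc j"] show ?thesis by simp
qed (use assms in simp_all)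

lemma first_pair_reach_Suc_less:
  assumes "1 \<le> k"
  shows "first_pair_reach (Suc k) + 2 \<le> 4 * first_reach k"
  using assms by (cases k rule: first_reach.cases) simp_all

lemma first_pair_reach_Suc_le_first_reach: "first_pair_reach (Suc k) \<le> 4 * first_reach k + 1"
  using first_pair_reach_Suc_less[of k] by (cases k) simp_all

definition reach_bounds :: "nat \<Rightarrow> bool" where
  "reach_bounds m \<longleftrightarrow>
     first_reach (ppl_rec m) \<le> m \<and> first_pair_reach (min (ppl_rec m) (ppl_rec (m + 1))) \<le> m"

lemma reach_bounds_mult_4:
  assumes "reach_bounds n"
  shows "reach_bounds (4 * n)"
proof -
  have g: "ppl_rec (4 * n) = ppl_rec n" "ppl_rec (4 * n + 1) = ppl_rec n + 1"
    using ppl_rec_4(1,2) by blast+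
  have "first_pair_reach (ppl_rec n) \<le> 4 * n"
    using first_pair_reach_less[of "ppl_rec n"] assms
    by (cases "ppl_rec n = 0") (auto simp: reach_bounds_def)
  with assms g show ?thesis by (simp add: reach_bounds_def)
qed

lemma reach_bounds_4_1:
  assumes "reach_bounds n"
  shows "reach_bounds (4 * n + 1)"
proof -
  have g: "ppl_rec (4 * n + 1) = ppl_rec n + 1"
    "ppl_rec (4 * n + 1 + 1) = min (ppl_rec n) (ppl_rec (n + 1)) + 2"
    using ppl_rec_4(2,3) by simp_all
  have "first_reach (ppl_rec n + 1) \<le> 4 * n + 1"
    using first_reach_Suc_le[of "ppl_rec n"] assms by (simp add: reach_bounds_def)
  moreover have "first_pair_reach (min (ppl_rec (4 * n + 1)) (ppl_rec (4 * n + 1 + 1))) \<le>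
      first_pair_reach (ppl_rec n + 1)"
    using g by (simp add: strict_mono_less_eq[OF strict_mono_first_pair_reach])
  moreover have "first_pair_reach (ppl_rec n + 1) \<le> 4 * n + 1"
    using first_pair_reach_Suc_le_first_reach[of "ppl_rec n"] assms by (simp add: reach_bounds_def)
  ultimately show ?thesis using g(1) by (simp add: reach_bounds_def)
qed

lemma reach_bounds_4_2:
  assumes "reach_bounds n" and "reach_bounds (n + 1)"
  shows "reach_bounds (4 * n + 2)"
proof -
  have g: "ppl_rec (4 * n + 2) = min (ppl_rec n) (ppl_rec (n + 1)) + 2"
    "ppl_rec (4 * n + 2 + 1) = ppl_rec (n + 1) + 1"
    using ppl_rec_4(3)[of "4 * n + 2" n] ppl_rec_4(4)[of "4 * n + 2 + 1" n] by simp_all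
  have "first_reach (ppl_rec (4 * n + 2)) \<le> 4 * n + 2"
    using g(1) assms(1) by (simp add: reach_bounds_def)
  moreover have "first_pair_reach (ppl_rec (n + 1) + 1) \<le> 4 * n + 2"
  proof (cases "ppl_rec (n + 1) = 0")
    case False
    then show ?thesis
      using first_pair_reach_Suc_less[of "ppl_rec (n + 1)"] assms(2) by (simp add: reach_bounds_def)
  qed simp
  moreover have "first_pair_reach (min (ppl_rec (4 * n + 2)) (ppl_rec (4 * n + 2 + 1))) \<le>
      first_pair_reach (ppl_rec (n + 1) + 1)"
    using g by (simp add: strict_mono_less_eq[OF strict_mono_first_pair_reach])
  ultimately show ?thesis by (simp add: reach_bounds_def)
qed

lemma reach_bounds_4_3:
  assumes "reach_bounds (n + 1)"
  shows "reach_bounds (4 * n + 3)"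
proof -
  have g: "ppl_rec (4 * n + 3) = ppl_rec (n + 1) + 1" "ppl_rec (4 * n + 3 + 1) = ppl_rec (n + 1)"
    using ppl_rec_4(4)[of "4 * n + 3" n] ppl_rec_4(1)[of "4 * n + 3 + 1" "n + 1"] by simp_all
  have "first_reach (ppl_rec (n + 1) + 1) \<le> 4 * n + 3"
  proof (cases "ppl_rec (n + 1) = 0")
    case False
    then show ?thesis
      using first_reach_Suc_less[of "ppl_rec (n + 1)"] assms by (simp add: reach_bounds_def)
  qed simp
  moreover have "first_pair_reach (ppl_rec (n + 1)) \<le> 4 * n + 3"
  proof (cases "ppl_rec (n + 1) = 0")
    case False
    then show ?thesis
      using first_pair_reach_less[of "ppl_rec (n + 1)"] assms by (simp add: reach_bounds_def)
  qed simp
  ultimately show ?thesis using g by (simp add: reach_bounds_def)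
qed

lemma reach_bounds: "reach_bounds m"
proof (induction m rule: less_induct)
  case (less m)
  show ?case
  proof (cases m rule: mod_4_cases)
    case (1 n)
    show ?thesis
    proof (cases "n = 0")
      case True
      with 1 show ?thesis by (simp add: reach_bounds_def ppl_rec_0)
    next
      case False
      with 1 less.IH[of n] show ?thesis using reach_bounds_mult_4 by simp
    qed
  next
    case (2 n)
    with less.IH[of n] show ?thesis using reach_bounds_4_1 by simp
  next
    case (3 n)
    with less.IH[of n] less.IH[of "n + 1"] show ?thesis using reach_bounds_4_2 by simp
  next
    case (4 n)
    with less.IH[of "n + 1"] show ?thesis using reach_bounds_4_3 by simp
  qed
qed

lemma first_reach_ppl_rec_le: "first_reach (ppl_rec m) \<le> m"
  using reach_bounds[of m] by (simp add: reach_bounds_def)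

lemma ppl_rec_1_2_3: "ppl_rec 1 = 1" "ppl_rec 2 = 2" "ppl_rec 3 = 2"
  using ppl_rec_4(2)[of 1 0] ppl_rec_4(3)[of 2 0] ppl_rec_4(4)[of 3 0] by (simp_all add: ppl_rec_0)

lemma ppl_rec_first_pair_reach:
  "k \<le> min (ppl_rec (first_pair_reach k)) (ppl_rec (first_pair_reach k + 1))"
proof (induction k rule: first_pair_reach.induct)
  case (4 k)
  define b where "b = first_pair_reach k"
  have "ppl_rec (4 * b + 1) = ppl_rec b + 1"
    "ppl_rec (4 * b + 2) = min (ppl_rec b) (ppl_rec (b + 1)) + 2"
    "ppl_rec (16 * b + 6) = min (ppl_rec (4 * b + 1)) (ppl_rec (4 * b + 2)) + 2"
    "ppl_rec (16 * b + 6 + 1) = ppl_rec (4 * b + 2) + 1"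
    using ppl_rec_4(2)[of "4 * b + 1" b] ppl_rec_4(3)[of "4 * b + 2" b]
      ppl_rec_4(3)[of "16 * b + 6" "4 * b + 1"] ppl_rec_4(4)[of "16 * b + 6 + 1" "4 * b + 1"]
    by simp_all
  with "4.IH" show ?case unfolding b_def by simp
qed (use ppl_rec_1_2_3 in \<open>simp_all add: numeral_2_eq_2 numeral_3_eq_3\<close>)

lemma ppl_rec_first_reach: "ppl_rec (first_reach k) = k"
proof (rule antisym)
  show "k \<le> ppl_rec (first_reach k)"
  proof (cases k rule: first_reach.cases)
    case (3 j)
    then show ?thesis
      using ppl_rec_first_pair_reach[of j] ppl_rec_4(3)[of "first_reach k" "first_pair_reach j"] by simp
  qed (use ppl_rec_0 ppl_rec_1_2_3 in simp_all)
  show "ppl_rec (first_reach k) \<le> k"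
  proof (rule ccontr)
    assume "\<not> ppl_rec (first_reach k) \<le> k"
    then have "first_reach (Suc k) \<le> first_reach (ppl_rec (first_reach k))"
      by (simp add: strict_mono_less_eq[OF strict_mono_first_reach])
    also have "\<dots> \<le> first_reach k" by (rule first_reach_ppl_rec_le)
    finally show False using strict_monoD[OF strict_mono_first_reach, of k "Suc k"] by simp
  qed
qed

theorem SP_t_eq_first_reach: "SP_t k = first_reach k"
  unfolding SP_t_def PPL_t_eq_ppl_rec
proof (rule Least_equality)
  show "ppl_rec (first_reach k) = k" by (rule ppl_rec_first_reach)
  show "first_reach k \<le> m" if "ppl_rec m = k" for m
    using first_reach_ppl_rec_le[of m] that by simp
qed

lemma base4_snoc: "base4 (ds @ [d]) = 4 * base4 ds + d"
  by (simp add: base4_def)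

lemma first_pair_reach_base4:
  assumes "first_pair_reach r = base4 ds"
  shows "first_pair_reach (3 * j + r) = base4 (ds @ concat (replicate j [1, 2]))"
proof (induction j)
  case (Suc j)
  have "concat (replicate (Suc j) [1, 2]) = (concat (replicate j [1, 2]) @ [1]) @ [2 :: nat]"
    by (simp add: replicate_append_same[symmetric])
  moreover have "first_pair_reach (3 * Suc j + r) = 16 * first_pair_reach (3 * j + r) + 6"
    by (simp add: numeral_eq_Suc)
  ultimately show ?case
    using Suc.IH by (simp only: append_assoc[symmetric] base4_snoc) simp
qed (simp add: assms)

lemma SP_t_base4:
  assumes "first_pair_reach r = base4 ds"
  shows "SP_t (3 * j + r + 2) = base4 (ds @ concat (replicate j [1, 2]) @ [2])"
proof -
  have "SP_t (3 * j + r + 2) = 4 * first_pair_reach (3 * j + r) + 2"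
    by (simp add: SP_t_eq_first_reach numeral_2_eq_2)
  also have "\<dots> = base4 ((ds @ concat (replicate j [1, 2])) @ [2])"
    by (simp only: first_pair_reach_base4[OF assms] base4_snoc)
  finally show ?thesis by simp
qed

theorem corollary15:
  shows "(\<forall>k::nat. SP_t (3*k+2) = base4 (concat (replicate k [1,2]) @ [2])) \<and>
         (\<forall>k::nat. k \<ge> 1 \<longrightarrow> SP_t (3*k) = base4 ([1] @ concat (replicate (k-1) [1,2]) @ [2])) \<and>
         (\<forall>k::nat. k \<ge> 1 \<longrightarrow> SP_t (3*k+1) = base4 ([2] @ concat (replicate (k-1) [1,2]) @ [2]))"
proof (intro conjI allI impI)
  fix k :: nat
  show "SP_t (3 * k + 2) = base4 (concat (replicate k [1, 2]) @ [2])"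
    using SP_t_base4[of 0 "[]" k] by (simp add: base4_def)
next
  fix k :: nat assume "k \<ge> 1"
  then have k: "3 * k = 3 * (k - 1) + 1 + 2" "3 * k + 1 = 3 * (k - 1) + 2 + 2" by simp_all
  show "SP_t (3 * k) = base4 ([1] @ concat (replicate (k - 1) [1, 2]) @ [2])"
    unfolding k(1) by (rule SP_t_base4) (simp add: base4_def)
  show "SP_t (3 * k + 1) = base4 ([2] @ concat (replicate (k - 1) [1, 2]) @ [2])"
    unfolding k(2) by (rule SP_t_base4) (simp add: base4_def numeral_2_eq_2)
qed

end
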